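(* There exists a unique root-lattice-graded $\mathbb{Q}(q)$-algebra surjection $\pi_B:U_q^+\to\mathcal{P}_B$ with $\pi_B(E_i)=e_i$ for all $i=1,\dots,n$.
   Context: $\mathfrak{g}$ is a symmetrizable Kac–Moody algebra of rank $n$ with Cartan matrix $A=(a_{ij})$; $d_1,\dots,d_n$ are coprime positive integers with $c_{ij}:=d_ia_{ij}=d_ja_{ji}$, and the invariant form is normalized by $(\alpha_i,\alpha_j)=c_{ij}$. For each pair $i<j$ with $a_{ij}\ne0$ choose $\sigma_{ij}\in\{\pm1\}$, and set $b_{ij}=\sigma_{ij}c_{ij}$ ($i<j$), $b_{ii}=0$, $b_{ij}=-\sigma_{ji}c_{ij}$ ($i>j$) (with $b_{ij}=0$ when $a_{ij}=0$). $U_q^+$ is the subalgebra of the quantum enveloping algebra $U_q(\mathfrak{g})$ generated by $E_1,\dots,E_n$ (equivalently, the $\mathbb{Q}(q)$-algebra on $E_i$ subject to the quantum Serre relations $\sum_{k=0}^{1-a_{ij}}(-1)^k\binom{1-a_{ij}}{k}_{q_i}E_i^{1-a_{ij}-k}E_jE_i^k=0$, $i\ne j$), graded by weight with $E_i$ of weight $\alpha_i$. $\mathcal{P}_B$ is the $\mathbb{Q}(q)$-algebra generated by $e_1,\dots,e_n$ with relations $e_ie_j=q^{b_{ij}}e_je_i$, graded by giving $e_i$ weight $\alpha_i$. *)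

theory Defs
  imports "HOL-Algebra.QuotRing" "HOL-Library.Poly_Mapping"
          "HOL-Computational_Algebra.Fraction_Field"
          "HOL-Computational_Algebra.Polynomial"
begin

type_synonym Qq = "rat poly fract"

definition qq :: Qq where "qq = Fraction_Field.Fract [:0, 1:] 1"

definition qint :: "Qq \<Rightarrow> nat \<Rightarrow> Qq" where
  "qint t m = (t ^ m - inverse t ^ m) / (t - inverse t)"

definition qfact :: "Qq \<Rightarrow> nat \<Rightarrow> Qq" where
  "qfact t m = (\<Prod>k\<in>{1..m}. qint t k)"

definition qbinom :: "Qq \<Rightarrow> nat \<Rightarrow> nat \<Rightarrow> Qq" where
  "qbinom t m k = qfact t m / (qfact t k * qfact t (m - k))"

definition sym_GCM :: "nat \<Rightarrow> (nat \<Rightarrow> nat \<Rightarrow> int) \<Rightarrow> (nat \<Rightarrow> int) \<Rightarrow> bool" where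
  "sym_GCM n A d \<longleftrightarrow>
     (\<forall>i\<in>{1..n}. A i i = 2) \<and>
     (\<forall>i\<in>{1..n}. \<forall>j\<in>{1..n}. i \<noteq> j \<longrightarrow> A i j \<le> 0) \<and>
     (\<forall>i\<in>{1..n}. \<forall>j\<in>{1..n}. A i j = 0 \<longleftrightarrow> A j i = 0) \<and>
     (\<forall>i\<in>{1..n}. d i > 0) \<and>
     Gcd (d ` {1..n}) = 1 \<and>
     (\<forall>i\<in>{1..n}. \<forall>j\<in>{1..n}. d i * A i j = d j * A j i)"

definition cmat :: "(nat \<Rightarrow> nat \<Rightarrow> int) \<Rightarrow> (nat \<Rightarrow> int) \<Rightarrow> nat \<Rightarrow> nat \<Rightarrow> int" where
  "cmat A d i j = d i * A i j"

definition sign_choice :: "nat \<Rightarrow> (nat \<Rightarrow> nat \<Rightarrow> int) \<Rightarrow> (nat \<Rightarrow> nat \<Rightarrow> int) \<Rightarrow> bool" where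
  "sign_choice n A \<sigma> \<longleftrightarrow>
     (\<forall>i\<in>{1..n}. \<forall>j\<in>{1..n}. i < j \<longrightarrow> A i j \<noteq> 0 \<longrightarrow> \<sigma> i j \<in> {1, -1})"

definition bmat :: "(nat \<Rightarrow> nat \<Rightarrow> int) \<Rightarrow> (nat \<Rightarrow> int) \<Rightarrow> (nat \<Rightarrow> nat \<Rightarrow> int) \<Rightarrow> nat \<Rightarrow> nat \<Rightarrow> int" where
  "bmat A d \<sigma> i j =
     (if A i j = 0 then 0
      else if i < j then \<sigma> i j * cmat A d i j
      else if i = j then 0
      else - \<sigma> j i * cmat A d i j)"

type_synonym fa = "nat list \<Rightarrow>\<^sub>0 Qq"

definition fa_mult :: "fa \<Rightarrow> fa \<Rightarrow> fa" where
  "fa_mult p r = (\<Sum>u\<in>Poly_Mapping.keys p. \<Sum>v\<in>Poly_Mapping.keys r. Poly_Mapping.single (u @ v) (Poly_Mapping.lookup p u * Poly_Mapping.lookup r v))"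

definition FreeAlg :: "nat \<Rightarrow> fa ring" where
  "FreeAlg n = \<lparr>carrier = {p. Poly_Mapping.keys p \<subseteq> lists {1..n}}, monoid.mult = fa_mult, one = Poly_Mapping.single [] 1,
              zero = 0, add = (+)\<rparr>"

definition fa_scalar :: "Qq \<Rightarrow> fa" where
  "fa_scalar c = Poly_Mapping.single [] c"

definition fa_gen :: "nat \<Rightarrow> fa" where
  "fa_gen i = Poly_Mapping.single [i] 1"

text \<open>Weight grading by the root lattice Z^n: the weight of a word is
  sum of alpha_i over its letters, encoded as its coefficient vector.\<close>
definition word_wt :: "nat list \<Rightarrow> (nat \<Rightarrow> int)" where
  "word_wt w = (\<lambda>i. int (count_list w i))"

definition fa_homog :: "(nat \<Rightarrow> int) \<Rightarrow> fa \<Rightarrow> bool" where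
  "fa_homog lam p \<longleftrightarrow> (\<forall>w\<in>Poly_Mapping.keys p. word_wt w = lam)"

definition serre_elem :: "(nat \<Rightarrow> nat \<Rightarrow> int) \<Rightarrow> (nat \<Rightarrow> int) \<Rightarrow> nat \<Rightarrow> nat \<Rightarrow> fa" where
  "serre_elem A d i j =
     (let N = nat (1 - A i j) in
      \<Sum>k\<in>{0..N}. Poly_Mapping.single (replicate (N - k) i @ [j] @ replicate k i)
                   ((-1) ^ k * qbinom (qq powi d i) N k))"

definition Uplus_ideal :: "nat \<Rightarrow> (nat \<Rightarrow> nat \<Rightarrow> int) \<Rightarrow> (nat \<Rightarrow> int) \<Rightarrow> fa set" where
  "Uplus_ideal n A d =
     genideal (FreeAlg n) {serre_elem A d i j | i j. i \<in> {1..n} \<and> j \<in> {1..n} \<and> i \<noteq> j}"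

definition Uplus :: "nat \<Rightarrow> (nat \<Rightarrow> nat \<Rightarrow> int) \<Rightarrow> (nat \<Rightarrow> int) \<Rightarrow> fa set ring" where
  "Uplus n A d = FreeAlg n Quot Uplus_ideal n A d"

definition PB_ideal :: "nat \<Rightarrow> (nat \<Rightarrow> nat \<Rightarrow> int) \<Rightarrow> fa set" where
  "PB_ideal n B =
     genideal (FreeAlg n) {Poly_Mapping.single [i, j] 1 - Poly_Mapping.single [j, i] (qq powi B i j)
                       | i j. i \<in> {1..n} \<and> j \<in> {1..n}}"

definition PB :: "nat \<Rightarrow> (nat \<Rightarrow> nat \<Rightarrow> int) \<Rightarrow> fa set ring" where
  "PB n B = FreeAlg n Quot PB_ideal n B"

definition cls :: "nat \<Rightarrow> fa set \<Rightarrow> fa \<Rightarrow> fa set" where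
  "cls n I x = I +>\<^bsub>FreeAlg n\<^esub> x"

definition quot_homog :: "nat \<Rightarrow> fa set \<Rightarrow> (nat \<Rightarrow> int) \<Rightarrow> fa set set" where
  "quot_homog n I lam = {cls n I x | x. x \<in> carrier (FreeAlg n) \<and> fa_homog lam x}"

definition graded_alg_surj :: "nat \<Rightarrow> fa set \<Rightarrow> fa set \<Rightarrow> (fa set \<Rightarrow> fa set) \<Rightarrow> bool" where
  "graded_alg_surj n I J \<pi> \<longleftrightarrow>
     \<pi> \<in> ring_hom (FreeAlg n Quot I) (FreeAlg n Quot J) \<and>
     (\<forall>c. \<forall>x\<in>carrier (FreeAlg n Quot I).
        \<pi> (cls n I (fa_scalar c) \<otimes>\<^bsub>FreeAlg n Quot I\<^esub> x) = cls n J (fa_scalar c) \<otimes>\<^bsub>FreeAlg n Quot J\<^esub> \<pi> x) \<and>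
     (\<forall>lam. \<pi> ` quot_homog n I lam \<subseteq> quot_homog n J lam) \<and>
     \<pi> ` carrier (FreeAlg n Quot I) = carrier (FreeAlg n Quot J)"

end

theory Submission
  imports Defs
begin

text \<open>In P_B the relation e_j e_i = q^(b_ji) e_i e_j gives e_j e_i^k = q^(k b_ji) e_i^k e_j, so the
  quantum Serre element for (i, j) is congruent to
  (\<Sum>k. (-1)^k [N choose k]_(q_i) q^(k b_ji)) e_i^N e_j with N = 1 - a_ij. As b_ji = \<plusminus>d_i (N - 1),
  this coefficient is the Gaussian binomial product \<Prod>j<N. (1 - x q_i^(\<plusminus>2j)) at x = 1, which
  vanishes. Hence the Serre ideal lies in the defining ideal of P_B and pi_B is the induced map of
  quotients; it is unique because U_q^+ is spanned over Q(q) by the classes of words in the E_i.\<close>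

section \<open>The free algebra as the monoid algebra of words\<close>

instantiation list :: (type) monoid_add
begin
definition zero_list_def: "(0::'a list) = []"
definition plus_list_def: "(xs::'a list) + ys = xs @ ys"
instance by standard (auto simp: zero_list_def plus_list_def)
end

lemma poly_mapping_sum_single_lookup:
  "(p::'a \<Rightarrow>\<^sub>0 'b::comm_monoid_add) = (\<Sum>u\<in>Poly_Mapping.keys p. Poly_Mapping.single u (Poly_Mapping.lookup p u))"
proof (rule poly_mapping_eqI)
  fix k
  show "Poly_Mapping.lookup p k = Poly_Mapping.lookup (\<Sum>u\<in>Poly_Mapping.keys p. Poly_Mapping.single u (Poly_Mapping.lookup p u)) k"
    unfolding lookup_sum lookup_single when_def
    by (cases "k \<in> Poly_Mapping.keys p") (simp_all add: in_keys_iff)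
qed

lemma poly_mapping_keys_induct [consumes 1, case_names zero single add]:
  fixes p :: "'a \<Rightarrow>\<^sub>0 'b::comm_monoid_add"
  assumes keys: "Poly_Mapping.keys p \<subseteq> S"
    and zero: "P 0"
    and single: "\<And>w c. w \<in> S \<Longrightarrow> P (Poly_Mapping.single w c)"
    and add: "\<And>a b. Poly_Mapping.keys a \<subseteq> S \<Longrightarrow> Poly_Mapping.keys b \<subseteq> S \<Longrightarrow> P a \<Longrightarrow> P b \<Longrightarrow> P (a + b)"
  shows "P p"
proof -
  let ?part = "\<lambda>U. \<Sum>u\<in>U. Poly_Mapping.single u (Poly_Mapping.lookup p u)"
  have "P (?part U)" if "U \<subseteq> Poly_Mapping.keys p" for U
    using finite_subset[OF that finite_keys] that
  proof (induction U rule: finite_induct)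
    case (insert u U)
    have "u \<in> S" "U \<subseteq> S"
      using insert.prems keys by auto
    then have "Poly_Mapping.keys (?part U) \<subseteq> S"
      by (intro order_trans[OF keys_sum]) auto
    moreover have "Poly_Mapping.keys (Poly_Mapping.single u (Poly_Mapping.lookup p u)) \<subseteq> S"
      using \<open>u \<in> S\<close> by simp
    ultimately have "P (Poly_Mapping.single u (Poly_Mapping.lookup p u) + ?part U)"
      using add single[OF \<open>u \<in> S\<close>] insert by simp
    then show ?case
      using insert.hyps by simp
  qed (simp add: zero)
  from this[OF order_refl] show ?thesis
    by (simp flip: poly_mapping_sum_single_lookup)
qed

lemma fa_mult_eq_times: "fa_mult p r = p * r"
proof -
  have "fa_mult p r = (\<Sum>u\<in>Poly_Mapping.keys p. \<Sum>v\<in>Poly_Mapping.keys r.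
      Poly_Mapping.single u (Poly_Mapping.lookup p u) * Poly_Mapping.single v (Poly_Mapping.lookup r v))"
    unfolding fa_mult_def by (simp only: mult_single plus_list_def)
  also have "\<dots> = (\<Sum>u\<in>Poly_Mapping.keys p. Poly_Mapping.single u (Poly_Mapping.lookup p u)) *
      (\<Sum>v\<in>Poly_Mapping.keys r. Poly_Mapping.single v (Poly_Mapping.lookup r v))"
    by (rule sum_product[symmetric])
  finally show ?thesis
    by (simp flip: poly_mapping_sum_single_lookup)
qed

lemma keys_times_subset_lists:
  assumes "Poly_Mapping.keys (p::fa) \<subseteq> lists S" "Poly_Mapping.keys r \<subseteq> lists S"
  shows "Poly_Mapping.keys (p * r) \<subseteq> lists S"
proof
  fix w assume "w \<in> Poly_Mapping.keys (p * r)"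
  then obtain a b where "w = a @ b" "a \<in> Poly_Mapping.keys p" "b \<in> Poly_Mapping.keys r"
    using keys_mult[of p r] by (auto simp: plus_list_def)
  then show "w \<in> lists S" using assms by auto
qed

lemma keys_add_subset:
  "Poly_Mapping.keys p \<subseteq> S \<Longrightarrow> Poly_Mapping.keys r \<subseteq> S \<Longrightarrow> Poly_Mapping.keys (p + r) \<subseteq> S"
  using keys_add[of p r] by blast

lemma one_fa_eq_single: "(1::fa) = Poly_Mapping.single [] 1"
  by (metis single_one zero_list_def)

lemma FreeAlg_simps [simp]:
  "carrier (FreeAlg n) = {p. Poly_Mapping.keys p \<subseteq> lists {1..n}}"
  "monoid.mult (FreeAlg n) = (*)"
  "monoid.one (FreeAlg n) = 1"
  "ring.zero (FreeAlg n) = 0"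
  "ring.add (FreeAlg n) = (+)"
  by (auto simp: FreeAlg_def fa_mult_eq_times[abs_def] one_fa_eq_single)

lemma ring_FreeAlg: "ring (FreeAlg n)"
proof (rule ringI)
  show "abelian_group (FreeAlg n)"
  proof (rule abelian_groupI)
    fix x assume "x \<in> carrier (FreeAlg n)"
    then show "\<exists>y\<in>carrier (FreeAlg n). y \<oplus>\<^bsub>FreeAlg n\<^esub> x = \<zero>\<^bsub>FreeAlg n\<^esub>"
      by (intro bexI[of _ "-x"]) auto
  qed (auto simp: algebra_simps keys_add_subset)
  show "monoid (FreeAlg n)"
    by (rule monoidI) (auto simp: keys_times_subset_lists mult.assoc one_fa_eq_single[symmetric] zero_list_def)
qed (auto simp: algebra_simps)

section \<open>Gaussian binomial coefficients\<close>

lemma qint_inverse [simp]: "qint (inverse s) m = qint s m"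
  unfolding qint_def
  by (metis inverse_inverse_eq minus_diff_eq divide_minus_right divide_minus_left minus_minus)

lemma qbinom_inverse [simp]: "qbinom (inverse s) N k = qbinom s N k"
  by (simp add: qbinom_def qfact_def)

lemma qfact_0 [simp]: "qfact s 0 = 1"
  by (simp add: qfact_def)

lemma qfact_Suc: "qfact s (Suc m) = qfact s m * qint s (Suc m)"
  by (simp add: qfact_def prod.nat_ivl_Suc' mult.commute)

lemma qint_add: "qint s (a + b) = inverse s ^ b * qint s a + s ^ a * qint s b"
proof -
  have "s ^ (a + b) - inverse s ^ (a + b)
      = inverse s ^ b * (s ^ a - inverse s ^ a) + s ^ a * (s ^ b - inverse s ^ b)"
    by (simp add: power_add algebra_simps power_mult_distrib[symmetric])
  then show ?thesis
    unfolding qint_def by (simp add: add_divide_distrib)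
qed

locale qint_nonzero =
  fixes s :: Qq
  assumes nonzero: "s \<noteq> 0"
    and qint_nonzero: "m \<ge> 1 \<Longrightarrow> qint s m \<noteq> 0"
begin

lemma qfact_nonzero: "qfact s m \<noteq> 0"
  by (induction m) (auto simp: qfact_Suc qint_nonzero)

lemma qbinom_self [simp]: "qbinom s N N = 1"
  by (simp add: qbinom_def qfact_nonzero)

lemma qbinom_0 [simp]: "qbinom s N 0 = 1"
  by (simp add: qbinom_def qfact_nonzero)

lemma qbinom_Suc_Suc:
  "qbinom s (Suc (j + Suc c)) (Suc j) =
     inverse s ^ Suc j * qbinom s (j + Suc c) (Suc j) + s ^ Suc c * qbinom s (j + Suc c) j"
proof -
  have qint: "qint s (Suc (j + Suc c)) = inverse s ^ Suc j * qint s (Suc c) + s ^ Suc c * qint s (Suc j)"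
    using qint_add[of s "Suc c" "Suc j"] by (simp add: add.commute)
  have diffs: "Suc (j + Suc c) - Suc j = Suc c" "j + Suc c - Suc j = c" "j + Suc c - j = Suc c"
    by auto
  have "qfact s (j + Suc c) \<noteq> 0" "qfact s j \<noteq> 0" "qfact s c \<noteq> 0"
    "qint s (Suc j) \<noteq> 0" "qint s (Suc c) \<noteq> 0"
    by (auto simp: qfact_nonzero qint_nonzero)
  then show ?thesis
    unfolding qbinom_def diffs qfact_Suc[of s "j + Suc c"] qfact_Suc[of s j] qfact_Suc[of s c] qint
    by (simp add: field_simps)
qed

text \<open>For k > N the value of qbinom s N k is junk (N - k truncates to 0), so the
  Gaussian binomial theorem is stated with the truncated coefficients.\<close>

definition qbinom_trunc :: "nat \<Rightarrow> nat \<Rightarrow> Qq" where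
  "qbinom_trunc N k = (if k \<le> N then qbinom s N k else 0)"

lemma qbinom_pascal:
  assumes "j \<le> N"
  shows "qbinom s (Suc N) (Suc j) = inverse s ^ Suc j * qbinom_trunc N (Suc j) + s ^ (N - j) * qbinom s N j"
proof (cases "j = N")
  case False
  then obtain c where "N = j + Suc c"
    using assms by (metis add_Suc_right le_neq_implies_less less_imp_Suc_add)
  then show ?thesis
    using qbinom_Suc_Suc[of j c] by (simp add: qbinom_trunc_def)
qed (simp add: qbinom_trunc_def)

lemma power_mult_inverse_power_eq:
  assumes "a + d = b + c"
  shows "s ^ a * inverse s ^ b = s ^ c * inverse s ^ d"
proof -
  have cancel: "s ^ k * inverse s ^ k = 1" for k
    using nonzero by (simp add: power_mult_distrib[symmetric])
  have "s ^ a * inverse s ^ b = s ^ (a + d) * inverse s ^ (b + d)"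
    using cancel[of d] by (simp add: power_add algebra_simps)
  also have "\<dots> = s ^ (b + c) * inverse s ^ (b + d)"
    using assms by simp
  also have "\<dots> = s ^ c * inverse s ^ d"
    using cancel[of b] by (simp add: power_add algebra_simps)
  finally show ?thesis .
qed

text \<open>The factor s^(k N) s^-k stands for s^(k (N - 1)), avoiding truncated subtraction.\<close>

definition gauss_coeff :: "nat \<Rightarrow> Qq \<Rightarrow> nat \<Rightarrow> Qq" where
  "gauss_coeff N x k = (-1) ^ k * qbinom_trunc N k * (s ^ (k * N) * inverse s ^ k) * x ^ k"

lemma gauss_coeff_0 [simp]: "gauss_coeff N x 0 = 1"
  by (simp add: gauss_coeff_def qbinom_trunc_def)

lemma gauss_coeff_beyond [simp]: "gauss_coeff N x (Suc N) = 0"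
  by (simp add: gauss_coeff_def qbinom_trunc_def)

lemma gauss_coeff_Suc_Suc:
  assumes "j \<le> N"
  shows "gauss_coeff (Suc N) x (Suc j) = gauss_coeff N x (Suc j) - x * s ^ (2 * N) * gauss_coeff N x j"
proof -
  obtain m where N: "N = j + m"
    using assms le_Suc_ex by blast
  have trunc: "qbinom_trunc N j = qbinom s N j" "qbinom_trunc (Suc N) (Suc j) = qbinom s (Suc N) (Suc j)"
    using assms by (auto simp: qbinom_trunc_def)
  have first: "s ^ (Suc j * Suc N) * inverse s ^ Suc j * inverse s ^ Suc j = s ^ (Suc j * N) * inverse s ^ Suc j"
  proof -
    have "s ^ (Suc j * Suc N) * inverse s ^ (Suc j + Suc j) = s ^ (Suc j * N) * inverse s ^ Suc j"
      by (rule power_mult_inverse_power_eq) (simp add: algebra_simps)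
    then show ?thesis
      by (simp add: power_add mult.assoc)
  qed
  have second: "s ^ (Suc j * Suc N) * inverse s ^ Suc j * s ^ (N - j) = s ^ (2 * N) * (s ^ (j * N) * inverse s ^ j)"
  proof -
    have "s ^ (Suc j * Suc N + (N - j)) * inverse s ^ Suc j = s ^ (2 * N + j * N) * inverse s ^ j"
      by (rule power_mult_inverse_power_eq) (simp add: N algebra_simps)
    then show ?thesis
      by (simp add: power_add algebra_simps)
  qed
  have regroup: "(a::Qq) * (i * p + e * r) * (z * i) * y = a * p * (z * i * i) * y + a * r * (z * i * e) * y"
    for a i p e r z y
    by (simp add: algebra_simps)
  show ?thesis
    unfolding gauss_coeff_def trunc qbinom_pascal[OF assms] regroup first second
    by (simp add: algebra_simps)
qed

lemma gauss_sum_Suc: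
  "(\<Sum>k\<le>Suc N. gauss_coeff (Suc N) x k) = (1 - x * s ^ (2 * N)) * (\<Sum>k\<le>N. gauss_coeff N x k)"
proof -
  have tail: "(\<Sum>j\<le>N. gauss_coeff N x (Suc j)) = (\<Sum>k\<le>N. gauss_coeff N x k) - 1"
  proof -
    have "(\<Sum>k\<le>N. gauss_coeff N x k) = (\<Sum>k\<le>Suc N. gauss_coeff N x k)"
      by simp
    also have "\<dots> = 1 + (\<Sum>j\<le>N. gauss_coeff N x (Suc j))"
      by (subst sum.atMost_Suc_shift) simp
    finally show ?thesis
      by simp
  qed
  have "(\<Sum>k\<le>Suc N. gauss_coeff (Suc N) x k) = 1 + (\<Sum>j\<le>N. gauss_coeff (Suc N) x (Suc j))"
    by (subst sum.atMost_Suc_shift) simp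
  also have "\<dots> = 1 + (\<Sum>j\<le>N. gauss_coeff N x (Suc j)) - x * s ^ (2 * N) * (\<Sum>k\<le>N. gauss_coeff N x k)"
    by (simp add: gauss_coeff_Suc_Suc sum_subtractf sum_distrib_left)
  finally show ?thesis
    unfolding tail by (simp add: algebra_simps)
qed

theorem gauss_binomial: "(\<Sum>k\<le>N. gauss_coeff N x k) = (\<Prod>j<N. 1 - x * s ^ (2 * j))"
proof (induction N)
  case (Suc N)
  then show ?case
    unfolding gauss_sum_Suc prod.lessThan_Suc by (simp add: mult.commute)
qed simp

lemma qbinom_alternating_sum:
  assumes "N \<ge> 1"
  shows "(\<Sum>k\<in>{0..N}. (-1) ^ k * qbinom s N k * (s ^ (N - 1)) ^ k) = 0"
proof -
  have "(-1) ^ k * qbinom s N k * (s ^ (N - 1)) ^ k = gauss_coeff N 1 k" if "k \<le> N" for k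
  proof -
    have "s ^ (k * (N - 1)) * inverse s ^ 0 = s ^ (k * N) * inverse s ^ k"
      by (rule power_mult_inverse_power_eq) (use assms in \<open>simp add: algebra_simps\<close>)
    moreover have "(s ^ (N - 1)) ^ k = s ^ (k * (N - 1))"
      by (metis power_mult mult.commute)
    ultimately show ?thesis
      using that by (simp add: gauss_coeff_def qbinom_trunc_def)
  qed
  then have "(\<Sum>k\<in>{0..N}. (-1) ^ k * qbinom s N k * (s ^ (N - 1)) ^ k) = (\<Prod>j<N. 1 - s ^ (2 * j))"
    using gauss_binomial[of N 1] by (simp add: atLeast0AtMost)
  also have "\<dots> = 0"
    using assms by (intro prod_zero) (auto intro!: bexI[of _ 0])
  finally show ?thesis .
qed

end

lemma qint_nonzero_inverse: "qint_nonzero s \<Longrightarrow> qint_nonzero (inverse s)"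
  unfolding qint_nonzero_def by simp

lemma (in qint_nonzero) qbinom_alternating_sum_inverse:
  assumes "N \<ge> 1"
  shows "(\<Sum>k\<in>{0..N}. (-1) ^ k * qbinom s N k * (inverse s ^ (N - 1)) ^ k) = 0"
  using qint_nonzero.qbinom_alternating_sum[OF qint_nonzero_inverse[OF qint_nonzero_axioms] assms]
  by simp

lemma qq_power: "qq ^ k = Fraction_Field.Fract ([:0, 1:] ^ k) 1"
  by (induction k) (simp_all add: qq_def One_fract_def)

lemma qq_nonzero: "qq \<noteq> 0"
  by (simp add: qq_def Zero_fract_def eq_fract)

lemma qq_power_ne_one: "k > 0 \<Longrightarrow> qq ^ k \<noteq> 1"
proof
  assume "k > 0" and "qq ^ k = 1"
  then have "([:0, 1:] ^ k :: rat poly) = 1"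
    by (simp add: qq_power One_fract_def eq_fract)
  then have "degree ([:0, 1:] ^ k :: rat poly) = 0"
    by simp
  with \<open>k > 0\<close> show False
    by (simp add: degree_power_eq)
qed

lemma qint_nonzero_qq_power:
  assumes "D > 0"
  shows "qint_nonzero (qq ^ D)"
proof
  let ?t = "qq ^ D"
  show "?t \<noteq> 0"
    using qq_nonzero by simp
  have power_ne_inverse: "?t ^ j \<noteq> inverse ?t ^ j" if "j \<ge> 1" for j
  proof
    assume "?t ^ j = inverse ?t ^ j"
    then have "?t ^ j * ?t ^ j = ?t ^ j * inverse (?t ^ j)"
      by (simp add: power_inverse)
    then have "?t ^ j * ?t ^ j = 1"
      using qq_nonzero by simp
    then have "qq ^ (D * j + D * j) = 1"
      by (simp add: power_add power_mult)
    then show False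
      using qq_power_ne_one[of "D * j + D * j"] assms that by simp
  qed
  fix m :: nat
  assume "m \<ge> 1"
  then show "qint ?t m \<noteq> 0"
    using power_ne_inverse[of 1] power_ne_inverse[of m] by (simp add: qint_def)
qed

section \<open>Ideals and quotients\<close>

locale FreeAlg_ideal =
  fixes n :: nat and K :: "fa set"
  assumes ideal: "ideal K (FreeAlg n)"
begin

lemma zero_closed: "0 \<in> K"
  using additive_subgroup.zero_closed[OF ideal.axioms(1)[OF ideal]] by simp

lemma add_closed: "a \<in> K \<Longrightarrow> b \<in> K \<Longrightarrow> a + b \<in> K"
  using additive_subgroup.a_closed[OF ideal.axioms(1)[OF ideal]] by simp

lemma sum_closed: "(\<And>x. x \<in> S \<Longrightarrow> f x \<in> K) \<Longrightarrow> sum f S \<in> K"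
  by (induction S rule: infinite_finite_induct) (auto simp: zero_closed add_closed)

lemma mult_closed:
  "a \<in> K \<Longrightarrow> u \<in> carrier (FreeAlg n) \<Longrightarrow> v \<in> carrier (FreeAlg n) \<Longrightarrow> u * a * v \<in> K"
  using ideal.I_l_closed[OF ideal] ideal.I_r_closed[OF ideal] by (metis FreeAlg_simps(2))

end

lemma FreeAlg_ideal_genideal: "S \<subseteq> carrier (FreeAlg n) \<Longrightarrow> FreeAlg_ideal n (genideal (FreeAlg n) S)"
  unfolding FreeAlg_ideal_def by (rule ring.genideal_ideal[OF ring_FreeAlg])

definition quot_lift :: "('a, 'b) ring_scheme \<Rightarrow> 'a set \<Rightarrow> 'a set \<Rightarrow> 'a set" where
  "quot_lift R J X = (\<Union>x\<in>X. J +>\<^bsub>R\<^esub> x)"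

context ring
begin

lemma carrier_Quot: "carrier (R Quot I) = {I +> x | x. x \<in> carrier R}"
  by (auto simp: FactRing_def A_RCOSETS_def')

lemma quot_lift_rcos:
  assumes "ideal I R" "ideal J R" "I \<subseteq> J" "x \<in> carrier R"
  shows "quot_lift R J (I +> x) = J +> x"
proof -
  interpret I: ideal I R by fact
  interpret J: ideal J R by fact
  have "J +> y = J +> x" if "y \<in> I +> x" for y
  proof -
    have "y \<in> J +> x"
      using that \<open>I \<subseteq> J\<close> by (auto simp: a_r_coset_def')
    then show ?thesis
      using J.a_repr_independence' \<open>x \<in> carrier R\<close> by simp
  qed
  moreover have "x \<in> I +> x"
    using I.a_rcos_self \<open>x \<in> carrier R\<close> .
  ultimately show ?thesis
    unfolding quot_lift_def by blast
qed

lemma quot_lift_ring_hom: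
  assumes "ideal I R" "ideal J R" "I \<subseteq> J"
  shows "quot_lift R J \<in> ring_hom (R Quot I) (R Quot J)"
proof -
  interpret I: ideal I R by fact
  interpret J: ideal J R by fact
  note lift = quot_lift_rcos[OF assms]
  show ?thesis
  proof (rule ring_hom_memI)
    fix X assume "X \<in> carrier (R Quot I)"
    then show "quot_lift R J X \<in> carrier (R Quot J)"
      by (auto simp: carrier_Quot lift)
  next
    fix X Y assume "X \<in> carrier (R Quot I)" "Y \<in> carrier (R Quot I)"
    then obtain x y where xy: "x \<in> carrier R" "y \<in> carrier R" "X = I +> x" "Y = I +> y"
      by (auto simp: carrier_Quot)
    show "quot_lift R J (X \<otimes>\<^bsub>R Quot I\<^esub> Y) = quot_lift R J X \<otimes>\<^bsub>R Quot J\<^esub> quot_lift R J Y"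
      using xy I.rcoset_mult_add J.rcoset_mult_add by (simp add: FactRing_def lift)
    show "quot_lift R J (X \<oplus>\<^bsub>R Quot I\<^esub> Y) = quot_lift R J X \<oplus>\<^bsub>R Quot J\<^esub> quot_lift R J Y"
      using xy I.a_rcos_sum J.a_rcos_sum by (simp add: FactRing_def lift)
  next
    show "quot_lift R J \<one>\<^bsub>R Quot I\<^esub> = \<one>\<^bsub>R Quot J\<^esub>"
      by (simp add: FactRing_def lift)
  qed
qed

lemma quot_lift_surj:
  assumes "ideal I R" "ideal J R" "I \<subseteq> J"
  shows "quot_lift R J ` carrier (R Quot I) = carrier (R Quot J)"
  using quot_lift_rcos[OF assms] by (force simp: carrier_Quot)

end

section \<open>The quantum Serre relations hold in P_B\<close>

lemma PB_relators_carrier: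
  "{Poly_Mapping.single [i, j] 1 - Poly_Mapping.single [j, i] (qq powi B i j) | i j. i \<in> {1..n} \<and> j \<in> {1..n}}
   \<subseteq> carrier (FreeAlg n)"
proof
  fix p
  assume "p \<in> {Poly_Mapping.single [i, j] 1 - Poly_Mapping.single [j, i] (qq powi B i j) | i j. i \<in> {1..n} \<and> j \<in> {1..n}}"
  then obtain i j where "i \<in> {1..n}" "j \<in> {1..n}"
    and p: "p = Poly_Mapping.single [i, j] 1 - Poly_Mapping.single [j, i] (qq powi B i j)"
    by blast
  have "Poly_Mapping.keys p \<subseteq> {[i, j], [j, i]}"
    unfolding p by (rule order_trans[OF keys_diff]) auto
  with \<open>i \<in> {1..n}\<close> \<open>j \<in> {1..n}\<close> show "p \<in> carrier (FreeAlg n)"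
    by auto
qed

lemma FreeAlg_ideal_PB_ideal: "FreeAlg_ideal n (PB_ideal n B)"
  unfolding PB_ideal_def by (rule FreeAlg_ideal_genideal[OF PB_relators_carrier])

lemma PB_ideal_swap:
  assumes "i \<in> {1..n}" "j \<in> {1..n}" "set u \<subseteq> {1..n}" "set v \<subseteq> {1..n}"
  shows "Poly_Mapping.single (u @ [i, j] @ v) c - Poly_Mapping.single (u @ [j, i] @ v) (qq powi B i j * c)
    \<in> PB_ideal n B"
proof -
  interpret FreeAlg_ideal n "PB_ideal n B"
    by (rule FreeAlg_ideal_PB_ideal)
  let ?rel = "Poly_Mapping.single [i, j] 1 - Poly_Mapping.single [j, i] (qq powi B i j)"
  have "?rel \<in> PB_ideal n B"
    unfolding PB_ideal_def using ring.genideal_self[OF ring_FreeAlg PB_relators_carrier] assms(1,2) by blast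
  then have "Poly_Mapping.single u 1 * ?rel * Poly_Mapping.single v c \<in> PB_ideal n B"
    by (rule mult_closed) (use assms(3,4) in auto)
  then show ?thesis
    by (simp add: algebra_simps mult_single plus_list_def)
qed

lemma PB_ideal_commute_power:
  assumes "i \<in> {1..n}" "j \<in> {1..n}" "set u \<subseteq> {1..n}"
  shows "Poly_Mapping.single (u @ [j] @ replicate k i) c
         - Poly_Mapping.single (u @ replicate k i @ [j]) ((qq powi B j i) ^ k * c) \<in> PB_ideal n B"
  using assms(3)
proof (induction k arbitrary: u c)
  case 0
  then show ?case
    using FreeAlg_ideal.zero_closed[OF FreeAlg_ideal_PB_ideal] by simp
next
  case (Suc k)
  interpret FreeAlg_ideal n "PB_ideal n B"
    by (rule FreeAlg_ideal_PB_ideal)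
  let ?t = "qq powi B j i"
  have "Poly_Mapping.single (u @ [j, i] @ replicate k i) c - Poly_Mapping.single (u @ [i, j] @ replicate k i) (?t * c)
      \<in> PB_ideal n B"
    by (rule PB_ideal_swap) (use assms Suc.prems in auto)
  moreover have "Poly_Mapping.single ((u @ [i]) @ [j] @ replicate k i) (?t * c)
      - Poly_Mapping.single ((u @ [i]) @ replicate k i @ [j]) (?t ^ k * (?t * c)) \<in> PB_ideal n B"
    by (rule Suc.IH) (use assms Suc.prems in auto)
  ultimately have "Poly_Mapping.single (u @ [j, i] @ replicate k i) c
      - Poly_Mapping.single ((u @ [i]) @ replicate k i @ [j]) (?t ^ k * (?t * c)) \<in> PB_ideal n B"
    using add_closed by fastforce
  moreover have "(u @ [i]) @ replicate k i @ [j] = u @ replicate (Suc k) i @ [j]"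
    by (simp add: replicate_app_Cons_same)
  ultimately show ?case
    by (simp add: algebra_simps)
qed

lemma bmat_swap_eq_sign_mult:
  assumes "sym_GCM n A d" "sign_choice n A \<sigma>" "i \<in> {1..n}" "j \<in> {1..n}" "i \<noteq> j"
  shows "\<exists>e\<in>{1, -1}. bmat A d \<sigma> j i = e * (d i * - A i j)"
proof -
  have sym: "d j * A j i = d i * A i j" and zero_iff: "A i j = 0 \<longleftrightarrow> A j i = 0"
    using assms(1,3,4) unfolding sym_GCM_def by auto
  consider "A j i = 0" | "A j i \<noteq> 0" "j < i" | "A j i \<noteq> 0" "i < j"
    using \<open>i \<noteq> j\<close> by linarith
  then show ?thesis
  proof cases
    case 2
    then have "\<sigma> j i \<in> {1, -1}"
      using assms(2-4) unfolding sign_choice_def by auto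
    then show ?thesis
      using 2 sym by (auto simp: bmat_def cmat_def)
  next
    case 3
    then have "\<sigma> i j \<in> {1, -1}"
      using assms(2-4) zero_iff unfolding sign_choice_def by auto
    then show ?thesis
      using 3 sym by (auto simp: bmat_def cmat_def)
  qed (use zero_iff in \<open>auto simp: bmat_def\<close>)
qed

lemma serre_coeff_sum_zero:
  assumes "sym_GCM n A d" "sign_choice n A \<sigma>" "i \<in> {1..n}" "j \<in> {1..n}" "i \<noteq> j"
  defines "N \<equiv> nat (1 - A i j)"
  shows "(\<Sum>k\<in>{0..N}. (-1) ^ k * qbinom (qq powi d i) N k * (qq powi bmat A d \<sigma> j i) ^ k) = 0"
proof -
  have "A i j \<le> 0" "d i > 0"
    using assms(1,3-5) unfolding sym_GCM_def by auto
  then obtain D where D: "D > 0" "d i = int D"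
    by (metis pos_int_cases)
  have N: "N \<ge> 1" "d i * - A i j = int (D * (N - 1))"
    using \<open>A i j \<le> 0\<close> D by (auto simp: N_def of_nat_diff)
  interpret qint_nonzero "qq ^ D"
    by (rule qint_nonzero_qq_power[OF D(1)])
  have s: "qq powi d i = qq ^ D"
    using D by simp
  have t: "qq powi (d i * - A i j) = (qq ^ D) ^ (N - 1)"
    unfolding N(2) by (simp only: power_int_of_nat power_mult)
  obtain e where "e \<in> {1, -1}" "bmat A d \<sigma> j i = e * (d i * - A i j)"
    using bmat_swap_eq_sign_mult[OF assms(1-5)] by blast
  then have "qq powi bmat A d \<sigma> j i = (qq ^ D) ^ (N - 1)
      \<or> qq powi bmat A d \<sigma> j i = inverse (qq ^ D) ^ (N - 1)"
    using t by (auto simp: power_int_minus power_inverse)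
  then show ?thesis
    using qbinom_alternating_sum[OF N(1)] qbinom_alternating_sum_inverse[OF N(1)]
    unfolding s by auto
qed

lemma single_sum: "Poly_Mapping.single w (sum f S) = (\<Sum>x\<in>S. Poly_Mapping.single w (f x))"
  by (induction S rule: infinite_finite_induct) (auto simp: single_add)

lemma serre_elem_in_PB_ideal:
  assumes "sym_GCM n A d" "sign_choice n A \<sigma>" "i \<in> {1..n}" "j \<in> {1..n}" "i \<noteq> j"
  shows "serre_elem A d i j \<in> PB_ideal n (bmat A d \<sigma>)"
proof -
  interpret FreeAlg_ideal n "PB_ideal n (bmat A d \<sigma>)"
    by (rule FreeAlg_ideal_PB_ideal)
  define N where "N = nat (1 - A i j)"
  define t where "t = qq powi bmat A d \<sigma> j i"
  define c where "c k = (-1) ^ k * qbinom (qq powi d i) N k" for k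
  let ?term = "\<lambda>k. Poly_Mapping.single (replicate (N - k) i @ [j] @ replicate k i) (c k)"
  have "?term k - Poly_Mapping.single (replicate N i @ [j]) (t ^ k * c k) \<in> PB_ideal n (bmat A d \<sigma>)"
    if "k \<in> {0..N}" for k
  proof -
    have "?term k - Poly_Mapping.single (replicate (N - k) i @ replicate k i @ [j]) (t ^ k * c k)
        \<in> PB_ideal n (bmat A d \<sigma>)"
      unfolding t_def by (rule PB_ideal_commute_power) (use assms(3,4) in auto)
    moreover have "replicate (N - k) i @ replicate k i @ [j] = replicate N i @ [j]"
      using that by (simp flip: replicate_add append_assoc)
    ultimately show ?thesis
      by simp
  qed
  then have "(\<Sum>k\<in>{0..N}. ?term k) - (\<Sum>k\<in>{0..N}. Poly_Mapping.single (replicate N i @ [j]) (t ^ k * c k))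
      \<in> PB_ideal n (bmat A d \<sigma>)"
    unfolding sum_subtractf[symmetric] by (rule sum_closed)
  moreover have "(\<Sum>k\<in>{0..N}. Poly_Mapping.single (replicate N i @ [j]) (t ^ k * c k)) = 0"
    using serre_coeff_sum_zero[OF assms] unfolding single_sum[symmetric] t_def c_def N_def
    by (simp add: mult.commute)
  moreover have "serre_elem A d i j = (\<Sum>k\<in>{0..N}. ?term k)"
    unfolding serre_elem_def Let_def N_def c_def ..
  ultimately show ?thesis
    by simp
qed

lemma serre_elem_carrier:
  "i \<in> {1..n} \<Longrightarrow> j \<in> {1..n} \<Longrightarrow> serre_elem A d i j \<in> carrier (FreeAlg n)"
  unfolding serre_elem_def Let_def FreeAlg_simps mem_Collect_eq
  by (rule order_trans[OF keys_sum]) auto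

lemma FreeAlg_ideal_Uplus_ideal: "FreeAlg_ideal n (Uplus_ideal n A d)"
  unfolding Uplus_ideal_def by (rule FreeAlg_ideal_genideal) (use serre_elem_carrier in blast)

lemma Uplus_ideal_subset_PB_ideal:
  assumes "sym_GCM n A d" "sign_choice n A \<sigma>"
  shows "Uplus_ideal n A d \<subseteq> PB_ideal n (bmat A d \<sigma>)"
  unfolding Uplus_ideal_def
  using FreeAlg_ideal.ideal[OF FreeAlg_ideal_PB_ideal] serre_elem_in_PB_ideal[OF assms]
  by (intro ring.genideal_minimal[OF ring_FreeAlg]) auto

section \<open>The induced graded surjection\<close>

lemma cls_ring_hom: "ideal K (FreeAlg n) \<Longrightarrow> cls n K \<in> ring_hom (FreeAlg n) (FreeAlg n Quot K)"
  unfolding cls_def[abs_def] by (rule ideal.rcos_ring_hom)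

lemma carrier_Quot_FreeAlg: "carrier (FreeAlg n Quot K) = cls n K ` carrier (FreeAlg n)"
  using ring.carrier_Quot[OF ring_FreeAlg] by (auto simp: cls_def)

lemma quot_lift_cls:
  assumes "ideal I (FreeAlg n)" "ideal J (FreeAlg n)" "I \<subseteq> J" "x \<in> carrier (FreeAlg n)"
  shows "quot_lift (FreeAlg n) J (cls n I x) = cls n J x"
  using ring.quot_lift_rcos[OF ring_FreeAlg assms] by (simp add: cls_def)

lemma graded_alg_surj_quot_lift:
  assumes "ideal I (FreeAlg n)" "ideal J (FreeAlg n)" "I \<subseteq> J"
  shows "graded_alg_surj n I J (quot_lift (FreeAlg n) J)"
proof -
  note lift = quot_lift_cls[OF assms]
  note hom = ring.quot_lift_ring_hom[OF ring_FreeAlg assms]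
  have scalar: "fa_scalar c \<in> carrier (FreeAlg n)" for c
    by (simp add: fa_scalar_def)
  have "quot_lift (FreeAlg n) J (cls n I (fa_scalar c) \<otimes>\<^bsub>FreeAlg n Quot I\<^esub> X)
      = cls n J (fa_scalar c) \<otimes>\<^bsub>FreeAlg n Quot J\<^esub> quot_lift (FreeAlg n) J X"
    if "X \<in> carrier (FreeAlg n Quot I)" for c X
  proof -
    have "cls n I (fa_scalar c) \<in> carrier (FreeAlg n Quot I)"
      using ring_hom_closed[OF cls_ring_hom[OF assms(1)] scalar] .
    then show ?thesis
      using ring_hom_mult[OF hom _ that] lift[OF scalar] by simp
  qed
  moreover have "quot_lift (FreeAlg n) J ` quot_homog n I lam \<subseteq> quot_homog n J lam" for lam
    unfolding quot_homog_def using lift by auto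
  ultimately show ?thesis
    unfolding graded_alg_surj_def using hom ring.quot_lift_surj[OF ring_FreeAlg assms] by blast
qed

lemma ring_hom_Quot_cls_word:
  assumes I: "ideal I (FreeAlg n)" and J: "ideal J (FreeAlg n)"
    and hom: "\<pi> \<in> ring_hom (FreeAlg n Quot I) (FreeAlg n Quot J)"
    and gens: "\<forall>i\<in>{1..n}. \<pi> (cls n I (fa_gen i)) = cls n J (fa_gen i)"
  shows "set w \<subseteq> {1..n} \<Longrightarrow> \<pi> (cls n I (Poly_Mapping.single w 1)) = cls n J (Poly_Mapping.single w 1)"
proof (induction w)
  case Nil
  then show ?case
    using ring_hom_one[OF hom] ring_hom_one[OF cls_ring_hom[OF I]] ring_hom_one[OF cls_ring_hom[OF J]]
    by (simp add: one_fa_eq_single)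
next
  case (Cons a w)
  have "Poly_Mapping.single (a # w) (1::Qq) = fa_gen a * Poly_Mapping.single w 1"
    by (simp add: fa_gen_def mult_single plus_list_def)
  moreover have "fa_gen a \<in> carrier (FreeAlg n)" "Poly_Mapping.single w (1::Qq) \<in> carrier (FreeAlg n)"
    using Cons.prems by (auto simp: fa_gen_def)
  ultimately show ?case
    using ring_hom_mult[OF cls_ring_hom[OF I]] ring_hom_mult[OF cls_ring_hom[OF J]] ring_hom_mult[OF hom]
      ring_hom_closed[OF cls_ring_hom[OF I]] Cons gens by simp
qed

lemma graded_alg_surj_cls_eq:
  assumes I: "ideal I (FreeAlg n)" and J: "ideal J (FreeAlg n)"
    and surj: "graded_alg_surj n I J \<pi>"
    and gens: "\<forall>i\<in>{1..n}. \<pi> (cls n I (fa_gen i)) = cls n J (fa_gen i)"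
    and x: "x \<in> carrier (FreeAlg n)"
  shows "\<pi> (cls n I x) = cls n J x"
proof -
  have hom: "\<pi> \<in> ring_hom (FreeAlg n Quot I) (FreeAlg n Quot J)"
    using surj by (simp add: graded_alg_surj_def)
  note clsI = cls_ring_hom[OF I] and clsJ = cls_ring_hom[OF J]
  note word = ring_hom_Quot_cls_word[OF I J hom gens]
  have monomial: "\<pi> (cls n I (Poly_Mapping.single w c)) = cls n J (Poly_Mapping.single w c)"
    if "set w \<subseteq> {1..n}" for w c
  proof -
    have "Poly_Mapping.single w c = fa_scalar c * Poly_Mapping.single w (1::Qq)"
      by (simp add: fa_scalar_def mult_single plus_list_def)
    moreover have "fa_scalar c \<in> carrier (FreeAlg n)" "Poly_Mapping.single w (1::Qq) \<in> carrier (FreeAlg n)"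
      using that by (auto simp: fa_scalar_def)
    ultimately show ?thesis
      using surj ring_hom_mult[OF clsI] ring_hom_mult[OF clsJ] ring_hom_closed[OF clsI] word[OF that]
      unfolding graded_alg_surj_def by simp
  qed
  from x have "Poly_Mapping.keys x \<subseteq> lists {1..n}"
    by simp
  then show ?thesis
  proof (induction x rule: poly_mapping_keys_induct)
    case zero
    then show ?case
      using ring_hom_zero[OF hom] ring_hom_zero[OF clsI] ring_hom_zero[OF clsJ]
        ring_FreeAlg ideal.quotient_is_ring[OF I] ideal.quotient_is_ring[OF J]
      by simp
  next
    case (single w c)
    then show ?case
      using monomial[of w c] by auto
  next
    case (add a b)
    then show ?case
      using ring_hom_add[OF hom] ring_hom_add[OF clsI] ring_hom_add[OF clsJ] ring_hom_closed[OF clsI]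
      by simp
  qed
qed

lemma graded_alg_surj_eq_quot_lift:
  assumes "ideal I (FreeAlg n)" "ideal J (FreeAlg n)" "I \<subseteq> J"
    and "graded_alg_surj n I J \<pi>"
    and "\<forall>i\<in>{1..n}. \<pi> (cls n I (fa_gen i)) = cls n J (fa_gen i)"
    and "X \<in> carrier (FreeAlg n Quot I)"
  shows "\<pi> X = quot_lift (FreeAlg n) J X"
proof -
  obtain x where "x \<in> carrier (FreeAlg n)" "X = cls n I x"
    using assms(6) unfolding carrier_Quot_FreeAlg by blast
  then show ?thesis
    using graded_alg_surj_cls_eq[OF assms(1,2,4,5)] quot_lift_cls[OF assms(1-3)] by simp
qed

theorem proposition4p2:
  fixes n :: nat and A :: "nat \<Rightarrow> nat \<Rightarrow> int" and d :: "nat \<Rightarrow> int"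
    and \<sigma> :: "nat \<Rightarrow> nat \<Rightarrow> int"
  assumes "sym_GCM n A d"
    and "sign_choice n A \<sigma>"
  shows "\<exists>\<pi>. graded_alg_surj n (Uplus_ideal n A d) (PB_ideal n (bmat A d \<sigma>)) \<pi>
            \<and> (\<forall>i\<in>{1..n}. \<pi> (cls n (Uplus_ideal n A d) (fa_gen i))
                            = cls n (PB_ideal n (bmat A d \<sigma>)) (fa_gen i))
            \<and> (\<forall>\<pi>'. graded_alg_surj n (Uplus_ideal n A d) (PB_ideal n (bmat A d \<sigma>)) \<pi>'
                    \<and> (\<forall>i\<in>{1..n}. \<pi>' (cls n (Uplus_ideal n A d) (fa_gen i))
                                   = cls n (PB_ideal n (bmat A d \<sigma>)) (fa_gen i))
                    \<longrightarrow> (\<forall>x\<in>carrier (Uplus n A d). \<pi>' x = \<pi> x))"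
proof -
  let ?I = "Uplus_ideal n A d" and ?J = "PB_ideal n (bmat A d \<sigma>)"
  have I: "ideal ?I (FreeAlg n)"
    using FreeAlg_ideal.ideal[OF FreeAlg_ideal_Uplus_ideal] .
  have J: "ideal ?J (FreeAlg n)"
    using FreeAlg_ideal.ideal[OF FreeAlg_ideal_PB_ideal] .
  have IJ: "?I \<subseteq> ?J"
    using Uplus_ideal_subset_PB_ideal[OF assms] .
  let ?\<pi> = "quot_lift (FreeAlg n) ?J"
  have "graded_alg_surj n ?I ?J ?\<pi>"
    using graded_alg_surj_quot_lift[OF I J IJ] .
  moreover have "\<forall>i\<in>{1..n}. ?\<pi> (cls n ?I (fa_gen i)) = cls n ?J (fa_gen i)"
    using quot_lift_cls[OF I J IJ] by (simp add: fa_gen_def)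
  moreover have "\<forall>\<pi>'. graded_alg_surj n ?I ?J \<pi>'
      \<and> (\<forall>i\<in>{1..n}. \<pi>' (cls n ?I (fa_gen i)) = cls n ?J (fa_gen i))
      \<longrightarrow> (\<forall>X\<in>carrier (Uplus n A d). \<pi>' X = ?\<pi> X)"
    using graded_alg_surj_eq_quot_lift[OF I J IJ] unfolding Uplus_def by blast
  ultimately show ?thesis
    by (intro exI[of _ ?\<pi>] conjI)
qed

end
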